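(* Let $D=\{d_1<d_2<d_3<\dotsb\}$ be an infinite set of positive integers. If there exist a real number $\delta>0$ and a positive integer $N$ such that $d_{n+1}\geq(3+\delta)d_n$ for all $n\geq N$, then $D$ is not $2$-accessible.
   Context: An $r$-coloring of a set $A$ is a function $\chi:A\to\{1,\dots,r\}$. For $D\subseteq\mathbb{N}=\{1,2,3,\dots\}$, a $k$-term $D$-diffsequence is a sequence of integers $x_1,\dots,x_k$ with $x_{i+1}-x_i\in D$ for all $1\le i\le k-1$. A set $D\subseteq\mathbb{N}$ is $r$-accessible if for every $r$-coloring of $\mathbb{N}$ and every $k\ge1$ there is a monochromatic $k$-term $D$-diffsequence in $\mathbb{N}$. *)

theory Defs
  imports "HOL-Analysis.Analysis"
begin

definition r_coloring :: "nat \<Rightarrow> (nat \<Rightarrow> nat) \<Rightarrow> bool" where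
  "r_coloring r c \<longleftrightarrow> (\<forall>x. x \<ge> 1 \<longrightarrow> c x \<in> {1..r})"

definition diffseq :: "nat set \<Rightarrow> nat \<Rightarrow> (nat \<Rightarrow> nat) \<Rightarrow> bool" where
  "diffseq D k x \<longleftrightarrow> (\<forall>i<k. x i \<ge> 1) \<and>
     (\<forall>i. Suc i < k \<longrightarrow> (\<exists>d\<in>D. int (x (Suc i)) - int (x i) = int d))"

definition monochromatic :: "(nat \<Rightarrow> nat) \<Rightarrow> nat \<Rightarrow> (nat \<Rightarrow> nat) \<Rightarrow> bool" where
  "monochromatic c k x \<longleftrightarrow> (\<forall>i<k. c (x i) = c (x 0))"

definition r_accessible :: "nat \<Rightarrow> nat set \<Rightarrow> bool" where
  "r_accessible r D \<longleftrightarrow>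
     (\<forall>c. r_coloring r c \<longrightarrow>
        (\<forall>k\<ge>1. \<exists>x. diffseq D k x \<and> monochromatic c k x))"

end

theory Submission
  imports Defs
begin

text \<open>Colour x by whether the fractional part of \<alpha> x lies in [0, 1/2). If there are \<alpha> and
  e > 0 with e \<le> frac (\<alpha> d) < 1/2 for every d \<in> D, then along a monochromatic D-diffsequence
  the fractional part of \<alpha> x never wraps around (a wrap would switch the colour), so it grows
  by at least e per step and the sequence has fewer than 1/e + 1 terms. Such an \<alpha> exists when
  the elements of D grow by a factor 3 + \<delta>: the sets of \<alpha> placing \<alpha> d in a window of width
  1/(2 + \<delta>) modulo 1 form nested intervals, the ratio condition being exactly what makes each
  interval for d_{n+1} fit inside the previous one.\<close>

lemma nested_window_step:
  fixes F F' l c :: real and m :: int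
  assumes F: "F > 0" and F': "F' > 0" and ratio: "(1 + l) * F \<le> l * F'"
  defines "m' \<equiv> \<lceil>(m + c) * F' / F - c\<rceil>"
  shows "(m + c) / F \<le> (m' + c) / F'" and "(m' + c + l) / F' \<le> (m + c + l) / F"
proof -
  have "(m + c) * F' / F - c \<le> m'" and "m' < (m + c) * F' / F - c + 1"
    unfolding m'_def by linarith+
  then have lo: "(m + c) * F' \<le> (m' + c) * F" and hi: "(m' + c) * F < (m + c) * F' + F"
    using F by (simp_all add: field_simps)
  show "(m + c) / F \<le> (m' + c) / F'"
    using lo F F' by (simp add: field_simps)
  have "(m' + c + l) * F = (m' + c) * F + l * F" by (simp add: algebra_simps)
  also have "\<dots> \<le> (m + c) * F' + (1 + l) * F" using hi by (simp add: algebra_simps)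
  also have "\<dots> \<le> (m + c + l) * F'" using ratio by (simp add: algebra_simps)
  finally show "(m' + c + l) / F' \<le> (m + c + l) / F"
    using F F' by (simp add: field_simps)
qed

lemma lacunary_multiplier_exists:
  fixes f :: "nat \<Rightarrow> nat" and l c :: real
  assumes pos: "\<And>k. f k > 0" and ratio: "\<And>k. (1 + l) * f k \<le> l * f (Suc k)" and "l > 0"
  obtains \<alpha> :: real
  where "\<And>k. \<exists>m::int. m + c \<le> \<alpha> * f k \<and> \<alpha> * f k \<le> m + c + l"
    and "c / f 0 \<le> \<alpha>" and "\<alpha> \<le> (c + l) / f 0"
proof -
  define m where "m = rec_nat (0::int) (\<lambda>k mk. \<lceil>(mk + c) * f (Suc k) / f k - c\<rceil>)"
  have m0: "m 0 = 0" and mSuc: "m (Suc k) = \<lceil>(m k + c) * f (Suc k) / f k - c\<rceil>" for k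
    by (simp_all add: m_def)
  define a where "a k = (m k + c) / f k" for k
  define b where "b k = (m k + c + l) / f k" for k
  have ab: "a k \<le> b k" for k
    using pos[of k] \<open>l > 0\<close> by (simp add: a_def b_def divide_right_mono)
  have inc: "incseq a" and dec: "decseq b"
    using nested_window_step[of "f k" "f (Suc k)" l "m k" c for k] pos ratio
    by (auto intro!: incseq_SucI decseq_SucI simp: a_def b_def mSuc)
  have "a i \<le> b 0" for i
    using ab[of i] decseqD[OF dec, of 0 i] by linarith
  then obtain \<alpha> where lim: "a \<longlonglongrightarrow> \<alpha>" and a_le: "\<And>i. a i \<le> \<alpha>"
    using incseq_convergent[OF inc] by blast
  have le_b: "\<alpha> \<le> b k" for k
    by (rule LIMSEQ_le_const2[OF lim], rule exI[of _ k]) (meson ab dec decseqD order_trans)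
  show thesis
  proof
    fix k
    have "m k + c \<le> \<alpha> * f k" "\<alpha> * f k \<le> m k + c + l"
      using a_le[of k] le_b[of k] pos[of k] by (simp_all add: a_def b_def field_simps)
    then show "\<exists>m::int. m + c \<le> \<alpha> * f k \<and> \<alpha> * f k \<le> m + c + l" by blast
  qed (use a_le[of 0] le_b[of 0] in \<open>simp_all add: a_def b_def m0\<close>)
qed

lemma enumerate_surj_above:
  fixes S :: "nat set"
  assumes "infinite S" and "d \<in> S" and "enumerate S N \<le> d"
  obtains n where "n \<ge> N" and "enumerate S n = d"
proof -
  obtain n where n: "enumerate S n = d" using enumerate_Ex[OF assms(1,2)] by blast
  have "n \<ge> N"
  proof (rule ccontr)
    assume "\<not> n \<ge> N"
    then have "enumerate S n < enumerate S N" using enumerate_mono[OF _ assms(1)] by simp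
    with assms(3) n show False by simp
  qed
  from this n show thesis by (rule that)
qed

lemma lacunary_frac_window:
  fixes D :: "nat set" and \<delta> :: real
  assumes "D \<subseteq> {1..}" and "infinite D" and "\<delta> > 0"
    and growth: "\<forall>n\<ge>N. real (enumerate D (Suc n)) \<ge> (3 + \<delta>) * real (enumerate D n)"
  obtains \<alpha> e :: real where "e > 0" and "\<And>d. d \<in> D \<Longrightarrow> e \<le> frac (\<alpha> * d) \<and> frac (\<alpha> * d) < 1/2"
proof -
  define f where "f k = enumerate D (N + k)" for k
  define l :: real where "l = 1 / (2 + \<delta>)"
  define c :: real where "c = (1/2 - l) / 2"
  have l: "l > 0" "l < 1/2"
    using \<open>\<delta> > 0\<close> by (simp_all add: l_def field_simps)
  moreover have "c = 1/4 - l/2" by (simp add: c_def)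
  ultimately have c: "c > 0" "c + l < 1/2" by linarith+
  have pos: "f k > 0" for k
    using enumerate_in_set[OF assms(2), of "N + k"] assms(1) by (auto simp: f_def)
  have ratio: "(1 + l) * f k \<le> l * f (Suc k)" for k
  proof -
    have "l * ((3 + \<delta>) * f k) \<le> l * f (Suc k)"
      using growth[rule_format, of "N + k"] l by (simp add: f_def)
    moreover have "l * (3 + \<delta>) = 1 + l" using \<open>\<delta> > 0\<close> by (simp add: l_def field_simps)
    ultimately show ?thesis by (metis mult.assoc)
  qed
  obtain \<alpha> :: real where window: "\<And>k. \<exists>m::int. m + c \<le> \<alpha> * f k \<and> \<alpha> * f k \<le> m + c + l"
    and lower: "c / f 0 \<le> \<alpha>" and upper: "\<alpha> \<le> (c + l) / f 0"
    using lacunary_multiplier_exists[of f l c, OF pos ratio \<open>l > 0\<close>] by blast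
  define e where "e = c / f 0"
  have "e > 0" using c pos[of 0] by (simp add: e_def)
  have "e \<le> c" using c pos[of 0] by (simp add: e_def field_simps)
  have "e \<le> frac (\<alpha> * d) \<and> frac (\<alpha> * d) < 1/2" if "d \<in> D" for d
  proof (cases "f 0 \<le> d")
    case True
    then have "enumerate D N \<le> d" by (simp add: f_def)
    then obtain n' where "n' \<ge> N" and "enumerate D n' = d"
      by (rule enumerate_surj_above[OF assms(2) \<open>d \<in> D\<close>])
    then have "f (n' - N) = d" by (simp add: f_def)
    then obtain m :: int where m: "m + c \<le> \<alpha> * d" "\<alpha> * d \<le> m + c + l"
      using window[of "n' - N"] by metis
    have "frac (\<alpha> * d) = \<alpha> * d - m"
      unfolding frac_unique_iff using m c by simp
    then show ?thesis using m c \<open>e \<le> c\<close> by simp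
  next
    case False
    \<comment> \<open>Below the lacunary range, \<alpha> d already lies in [e, c + l) since \<alpha> \<le> (c + l) / f 0.\<close>
    have "real d \<ge> 1" using that assms(1) by auto
    then have "e \<le> \<alpha> * d"
      using lower \<open>e > 0\<close> mult_mono[of e \<alpha> 1 "real d"] by (simp add: e_def)
    moreover have "\<alpha> * d < 1/2"
    proof -
      have "\<alpha> * d \<le> (c + l) * (d / f 0)" using mult_right_mono[OF upper, of "real d"] by simp
      also have "\<dots> < (c + l) * 1"
        using False c l pos[of 0] by (intro mult_strict_left_mono) auto
      finally show ?thesis using c by simp
    qed
    ultimately show ?thesis using \<open>e > 0\<close> by (simp add: frac_eq)
  qed
  with \<open>e > 0\<close> show thesis by (rule that)
qed

definition half_frac_coloring :: "real \<Rightarrow> nat \<Rightarrow> nat" where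
  "half_frac_coloring \<alpha> x = (if frac (\<alpha> * x) < 1/2 then 1 else 2)"

lemma r_coloring_half_frac_coloring: "r_coloring 2 (half_frac_coloring \<alpha>)"
  by (simp add: r_coloring_def half_frac_coloring_def)

lemma frac_add_same_half:
  fixes a b :: real
  assumes "frac b < 1/2" and "frac a < 1/2 \<longleftrightarrow> frac (a + b) < 1/2"
  shows "frac (a + b) = frac a + frac b"
proof -
  have "frac a + frac b < 1"
  proof (rule ccontr)
    assume wrap: "\<not> frac a + frac b < 1"
    then have "frac (a + b) = frac a + frac b - 1" using frac_add[of a b] by argo
    moreover have "\<not> frac a < 1/2" using wrap assms(1) by linarith
    then have "\<not> frac (a + b) < 1/2" using assms(2) by blast
    ultimately show False using assms(1) frac_lt_1[of a] by linarith
  qed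
  then show ?thesis using frac_add[of a b] by argo
qed

lemma frac_grows_along_monochromatic_diffseq:
  fixes e \<alpha> :: real
  assumes window: "\<And>d. d \<in> D \<Longrightarrow> e \<le> frac (\<alpha> * d) \<and> frac (\<alpha> * d) < 1/2"
    and x: "diffseq D k x" and mono: "monochromatic (half_frac_coloring \<alpha>) k x"
  shows "i < k \<Longrightarrow> i * e \<le> frac (\<alpha> * x i)"
proof (induction i)
  case 0
  then show ?case by simp
next
  case (Suc i)
  obtain d where "d \<in> D" and "int (x (Suc i)) - int (x i) = int d"
    using x Suc.prems unfolding diffseq_def by blast
  then have "real (x (Suc i)) = real (x i) + real d"
    by linarith
  then have step: "\<alpha> * x (Suc i) = \<alpha> * x i + \<alpha> * d"
    by (simp add: distrib_left)
  have "half_frac_coloring \<alpha> (x (Suc i)) = half_frac_coloring \<alpha> (x i)"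
    using mono Suc.prems unfolding monochromatic_def by (metis Suc_lessD)
  then have "frac (\<alpha> * x (Suc i)) = frac (\<alpha> * x i) + frac (\<alpha> * d)"
    using window[OF \<open>d \<in> D\<close>] unfolding step half_frac_coloring_def
    by (intro frac_add_same_half) (auto split: if_splits)
  moreover have "i * e \<le> frac (\<alpha> * x i)" using Suc.IH Suc.prems by simp
  moreover have "e \<le> frac (\<alpha> * d)" using window[OF \<open>d \<in> D\<close>] by blast
  ultimately show ?case by (simp add: distrib_right)
qed

lemma frac_window_not_2_accessible:
  fixes e \<alpha> :: real
  assumes "e > 0" and window: "\<And>d. d \<in> D \<Longrightarrow> e \<le> frac (\<alpha> * d) \<and> frac (\<alpha> * d) < 1/2"
  shows "\<not> r_accessible 2 D"
proof
  assume "r_accessible 2 D"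
  obtain k :: nat where k: "1 < k * e" using ex_less_of_nat_mult[OF \<open>e > 0\<close>] by blast
  obtain x where x: "diffseq D (Suc k) x" and mono: "monochromatic (half_frac_coloring \<alpha>) (Suc k) x"
    using \<open>r_accessible 2 D\<close>[unfolded r_accessible_def, rule_format,
        OF r_coloring_half_frac_coloring[of \<alpha>], of "Suc k"]
    by auto
  have "k * e \<le> frac (\<alpha> * x k)"
    using frac_grows_along_monochromatic_diffseq[OF window x mono, of k] by simp
  with k frac_lt_1[of "\<alpha> * x k"] show False by linarith
qed

theorem mainTheorem2:
  fixes D :: "nat set"
  assumes "D \<subseteq> {1..}" and "infinite D"
    and "\<exists>(\<delta>::real) > 0. \<exists>N::nat. \<forall>n\<ge>N.
           real (enumerate D (Suc n)) \<ge> (3 + \<delta>) * real (enumerate D n)"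
  shows "\<not> r_accessible 2 D"
proof -
  obtain \<delta> :: real and N where "\<delta> > 0"
    and growth: "\<forall>n\<ge>N. real (enumerate D (Suc n)) \<ge> (3 + \<delta>) * real (enumerate D n)"
    using assms(3) by blast
  obtain \<alpha> e :: real where "e > 0"
    and "\<And>d. d \<in> D \<Longrightarrow> e \<le> frac (\<alpha> * d) \<and> frac (\<alpha> * d) < 1/2"
    using lacunary_frac_window[OF assms(1,2) \<open>\<delta> > 0\<close> growth] by blast
  then show ?thesis by (rule frac_window_not_2_accessible)
qed

end
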